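(* Let $(S,\curlyvee)$ be an algebra with one binary operation. Then $(S,\curlyvee)$ is functional (isomorphic to a set of partial functions closed under restricted union, with $\curlyvee$ interpreted as restricted union) if and only if $(S,\curlyvee)$ is a $\curlyvee$-algebra. Moreover, the class of $\curlyvee$-algebras consists of (algebras isomorphic to) subdirect products of flat $\curlyvee$-algebras.
   Context: For sets $X,Y$, $\mathrm{Par}(X,Y)$ is the set of partial functions from $X$ to $Y$, viewed as sets of ordered pairs. For $f,g\in\mathrm{Par}(X,Y)$ let $g-f$ denote the restriction of $g$ to $X\setminus\mathrm{dom}(f)$. Restricted union is $f\curlyvee g=(f-g)\cup(f\cap g)\cup(g-f)$ (the restriction of the relation $f\cup g$ to the points where it is single-valued). An algebra $(S,\curlyvee)$ is functional if it is isomorphic to $(A,\curlyvee)$ for some $A\subseteq\mathrm{Par}(X,Y)$ closed under $\curlyvee$, for some sets $X,Y$. A left regular band is a set with a binary operation $\sqcup$ satisfying $a\sqcup(b\sqcup c)=(a\sqcup b)\sqcup c$, $a\sqcup a=a$, $a\sqcup b=(a\sqcup b)\sqcup a$. On an algebra with operation $\sqcup$ write $a\lesssim b$ iff $b\sqcup a=b$. A $\curlyvee$-algebra is an algebra $(S,\curlyvee)$ such that, defining $a\sqcup b=a\curlyvee(a\curlyvee b)$ for all $a,b\in S$: $(S,\sqcup)$ is a left regular band; $\curlyvee$ is commutative and idempotent; $(a\curlyvee b)\sqcup(a\sqcup b)=a\sqcup b$; $a\sqcup(b\curlyvee c)=(a\sqcup b)\curlyvee(a\sqcup c)$; and for all $a,b,c,d$,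 if $d\lesssim a$, $d\lesssim b$, $d\lesssim c$, $d\lesssim a\curlyvee b$ and $d\lesssim b\curlyvee c$ then $d\lesssim a\curlyvee c$. A flat $\curlyvee$-algebra is an algebra $(S,\curlyvee)$ with an element $0\in S$ such that $a\curlyvee b=0$ whenever $a,b$ are distinct and both different from $0$, and $a\curlyvee a=a$, $a\curlyvee 0=0\curlyvee a=a$ for all $a\in S$. *)

theory Defs
  imports Main "HOL-Library.FuncSet"
begin

definition Par :: "'x set \<Rightarrow> 'y set \<Rightarrow> ('x \<times> 'y) set set" where
  "Par X Y = {f. f \<subseteq> X \<times> Y \<and> (\<forall>x y z. (x, y) \<in> f \<and> (x, z) \<in> f \<longrightarrow> y = z)}"

definition pminus :: "('x \<times> 'y) set \<Rightarrow> ('x \<times> 'y) set \<Rightarrow> ('x \<times> 'y) set" where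
  "pminus g f = {(x, y) \<in> g. x \<notin> Domain f}"

definition rvee :: "('x \<times> 'y) set \<Rightarrow> ('x \<times> 'y) set \<Rightarrow> ('x \<times> 'y) set" where
  "rvee f g = pminus f g \<union> (f \<inter> g) \<union> pminus g f"

definition closed_op :: "'a set \<Rightarrow> ('a \<Rightarrow> 'a \<Rightarrow> 'a) \<Rightarrow> bool" where
  "closed_op S op \<longleftrightarrow> (\<forall>a\<in>S. \<forall>b\<in>S. op a b \<in> S)"

definition iso_onto :: "'a set \<Rightarrow> ('a \<Rightarrow> 'a \<Rightarrow> 'a) \<Rightarrow> 'b set \<Rightarrow> ('b \<Rightarrow> 'b \<Rightarrow> 'b) \<Rightarrow> ('a \<Rightarrow> 'b) \<Rightarrow> bool" where
  "iso_onto S op A op' h \<longleftrightarrow> bij_betw h S A \<and> (\<forall>a\<in>S. \<forall>b\<in>S. h (op a b) = op' (h a) (h b))"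

definition functional_rep ::
  "'a set \<Rightarrow> ('a \<Rightarrow> 'a \<Rightarrow> 'a) \<Rightarrow> 'x set \<Rightarrow> 'y set \<Rightarrow> ('x \<times> 'y) set set \<Rightarrow> ('a \<Rightarrow> ('x \<times> 'y) set) \<Rightarrow> bool" where
  "functional_rep S op X Y A h \<longleftrightarrow>
     A \<subseteq> Par X Y \<and> (\<forall>f\<in>A. \<forall>g\<in>A. rvee f g \<in> A) \<and> iso_onto S op A rvee h"

definition sqcup :: "('a \<Rightarrow> 'a \<Rightarrow> 'a) \<Rightarrow> 'a \<Rightarrow> 'a \<Rightarrow> 'a" where
  "sqcup op a b = op a (op a b)"

definition lesssim :: "('a \<Rightarrow> 'a \<Rightarrow> 'a) \<Rightarrow> 'a \<Rightarrow> 'a \<Rightarrow> bool" where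
  "lesssim op a b \<longleftrightarrow> sqcup op b a = b"

definition vee_algebra :: "'a set \<Rightarrow> ('a \<Rightarrow> 'a \<Rightarrow> 'a) \<Rightarrow> bool" where
  "vee_algebra S op \<longleftrightarrow>
     closed_op S op \<and>
     (\<forall>a\<in>S. \<forall>b\<in>S. \<forall>c\<in>S. sqcup op a (sqcup op b c) = sqcup op (sqcup op a b) c) \<and>
     (\<forall>a\<in>S. sqcup op a a = a) \<and>
     (\<forall>a\<in>S. \<forall>b\<in>S. sqcup op a b = sqcup op (sqcup op a b) a) \<and>
     (\<forall>a\<in>S. \<forall>b\<in>S. op a b = op b a) \<and>
     (\<forall>a\<in>S. op a a = a) \<and>
     (\<forall>a\<in>S. \<forall>b\<in>S. sqcup op (op a b) (sqcup op a b) = sqcup op a b) \<and>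
     (\<forall>a\<in>S. \<forall>b\<in>S. \<forall>c\<in>S. sqcup op a (op b c) = op (sqcup op a b) (sqcup op a c)) \<and>
     (\<forall>a\<in>S. \<forall>b\<in>S. \<forall>c\<in>S. \<forall>d\<in>S.
        lesssim op d a \<and> lesssim op d b \<and> lesssim op d c \<and>
        lesssim op d (op a b) \<and> lesssim op d (op b c) \<longrightarrow> lesssim op d (op a c))"

definition flat_algebra :: "'b set \<Rightarrow> ('b \<Rightarrow> 'b \<Rightarrow> 'b) \<Rightarrow> bool" where
  "flat_algebra F op \<longleftrightarrow>
     (\<exists>z\<in>F. \<forall>a\<in>F. \<forall>b\<in>F.
        (a \<noteq> b \<and> a \<noteq> z \<and> b \<noteq> z \<longrightarrow> op a b = z) \<and>
        op a a = a \<and> op a z = a \<and> op z a = a)"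

definition prod_op :: "'i set \<Rightarrow> ('i \<Rightarrow> 'b \<Rightarrow> 'b \<Rightarrow> 'b) \<Rightarrow> ('i \<Rightarrow> 'b) \<Rightarrow> ('i \<Rightarrow> 'b) \<Rightarrow> ('i \<Rightarrow> 'b)" where
  "prod_op I Op p q = (\<lambda>i. if i \<in> I then Op i (p i) (q i) else undefined)"

definition subdirect_product_of_flat ::
  "('i \<Rightarrow> 'b) set \<Rightarrow> 'i set \<Rightarrow> ('i \<Rightarrow> 'b set) \<Rightarrow> ('i \<Rightarrow> 'b \<Rightarrow> 'b \<Rightarrow> 'b) \<Rightarrow> bool" where
  "subdirect_product_of_flat B I F Op \<longleftrightarrow>
     (\<forall>i\<in>I. flat_algebra (F i) (Op i)) \<and>
     B \<subseteq> PiE I F \<and>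
     (\<forall>p\<in>B. \<forall>q\<in>B. prod_op I Op p q \<in> B) \<and>
     (\<forall>i\<in>I. (\<lambda>p. p i) ` B = F i)"

end

theory Submission
  imports Defs
begin

text \<open>Restricted union, looked at in a single point of the domain, is the flat \<open>\<curlyvee>\<close>-algebra on
  \<open>'v option\<close> with \<open>None\<close> (undefined) as zero. So functional algebras and subdirect products of flat
  algebras are both algebras whose points are separated by homomorphisms into flat option algebras.
  The \<open>\<curlyvee>\<close>-algebra axioms are identities plus one quasi-identity, all valid in the option algebra,
  so they hold in every such algebra.

  Conversely, let \<open>S\<close> be a \<open>\<curlyvee>\<close>-algebra and \<open>d \<lesssim> b\<close> fail. By Zorn's lemma there is an ideal \<open>P\<close>
  (a down-set closed under \<open>\<squnion>\<close>) containing \<open>b\<close> that is maximal among those avoiding \<open>d\<close>. On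
  \<open>S - P\<close>, the quasi-identity makes \<open>x \<curlyvee> y \<notin> P\<close> an equivalence relation, and the map sending \<open>P\<close>
  to \<open>None\<close> and every other element to its class is a homomorphism into the option algebra. These
  homomorphisms separate points. Evaluating all of them at \<open>s\<close> gives a partial function on the
  set of homomorphisms, and also an element of a subdirect product of flat algebras.\<close>

fun option_vee :: "'v option \<Rightarrow> 'v option \<Rightarrow> 'v option" where
  "option_vee None b = b"
| "option_vee (Some u) None = Some u"
| "option_vee (Some u) (Some v) = (if u = v then Some u else None)"

lemma option_vee_None_right [simp]: "option_vee a None = a"
  by (cases a) auto

lemma option_vee_eq_Some_iff:
  "option_vee a b = Some y \<longleftrightarrow>
     (a = Some y \<and> b = None) \<or> (a = Some y \<and> b = Some y) \<or> (a = None \<and> b = Some y)"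
  by (cases a; cases b) auto

lemma option_vee_idem [simp]: "option_vee a a = a"
  by (cases a) auto

lemma flat_algebra_option_vee:
  assumes "None \<in> F"
  shows "flat_algebra F option_vee"
  unfolding flat_algebra_def
proof (intro bexI[of _ None] ballI conjI impI)
  fix a b :: "'v option"
  assume "a \<noteq> b \<and> a \<noteq> None \<and> b \<noteq> None"
  then show "option_vee a b = None" by (cases a; cases b) auto
qed (simp_all add: assms)

locale vee_alg =
  fixes S :: "'a set" and op :: "'a \<Rightarrow> 'a \<Rightarrow> 'a"
  assumes vee_algebra: "vee_algebra S op"
begin

abbreviation vee (infixl "\<curlyvee>" 70) where "x \<curlyvee> y \<equiv> op x y"
abbreviation join (infixl "\<squnion>" 65) where "x \<squnion> y \<equiv> sqcup op x y"
abbreviation below (infix "\<lesssim>" 50) where "x \<lesssim> y \<equiv> lesssim op x y"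

lemma vee_closed: "x \<in> S \<Longrightarrow> y \<in> S \<Longrightarrow> x \<curlyvee> y \<in> S"
  using vee_algebra unfolding vee_algebra_def closed_op_def by blast

lemma join_closed: "x \<in> S \<Longrightarrow> y \<in> S \<Longrightarrow> x \<squnion> y \<in> S"
  unfolding sqcup_def by (intro vee_closed)

lemma join_assoc: "a \<in> S \<Longrightarrow> b \<in> S \<Longrightarrow> c \<in> S \<Longrightarrow> a \<squnion> (b \<squnion> c) = (a \<squnion> b) \<squnion> c"
  using vee_algebra unfolding vee_algebra_def by blast

lemma join_idem: "a \<in> S \<Longrightarrow> a \<squnion> a = a"
  using vee_algebra unfolding vee_algebra_def by blast

lemma join_left_regular: "a \<in> S \<Longrightarrow> b \<in> S \<Longrightarrow> (a \<squnion> b) \<squnion> a = a \<squnion> b"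
  using vee_algebra unfolding vee_algebra_def by metis

lemma vee_commute: "a \<in> S \<Longrightarrow> b \<in> S \<Longrightarrow> a \<curlyvee> b = b \<curlyvee> a"
  using vee_algebra unfolding vee_algebra_def by blast

lemma vee_idem: "a \<in> S \<Longrightarrow> a \<curlyvee> a = a"
  using vee_algebra unfolding vee_algebra_def by blast

lemma join_vee_join: "a \<in> S \<Longrightarrow> b \<in> S \<Longrightarrow> (a \<curlyvee> b) \<squnion> (a \<squnion> b) = a \<squnion> b"
  using vee_algebra unfolding vee_algebra_def by blast

lemma join_vee_distrib:
  "a \<in> S \<Longrightarrow> b \<in> S \<Longrightarrow> c \<in> S \<Longrightarrow> a \<squnion> (b \<curlyvee> c) = (a \<squnion> b) \<curlyvee> (a \<squnion> c)"
  using vee_algebra unfolding vee_algebra_def by blast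

lemma below_vee_trans:
  "a \<in> S \<Longrightarrow> b \<in> S \<Longrightarrow> c \<in> S \<Longrightarrow> d \<in> S \<Longrightarrow> d \<lesssim> a \<Longrightarrow> d \<lesssim> b \<Longrightarrow> d \<lesssim> c \<Longrightarrow>
    d \<lesssim> a \<curlyvee> b \<Longrightarrow> d \<lesssim> b \<curlyvee> c \<Longrightarrow> d \<lesssim> a \<curlyvee> c"
  using vee_algebra unfolding vee_algebra_def by blast

lemma below_refl: "x \<in> S \<Longrightarrow> x \<lesssim> x"
  unfolding lesssim_def by (rule join_idem)

lemma below_trans: "x \<in> S \<Longrightarrow> y \<in> S \<Longrightarrow> z \<in> S \<Longrightarrow> x \<lesssim> y \<Longrightarrow> y \<lesssim> z \<Longrightarrow> x \<lesssim> z"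
  unfolding lesssim_def using join_assoc[of z y x] by simp

lemma below_join1: "x \<in> S \<Longrightarrow> y \<in> S \<Longrightarrow> x \<lesssim> x \<squnion> y"
  unfolding lesssim_def by (rule join_left_regular)

lemma below_join2: "x \<in> S \<Longrightarrow> y \<in> S \<Longrightarrow> y \<lesssim> x \<squnion> y"
  unfolding lesssim_def using join_assoc[of x y y] join_idem by simp

lemma join_below: "x \<in> S \<Longrightarrow> y \<in> S \<Longrightarrow> z \<in> S \<Longrightarrow> x \<lesssim> z \<Longrightarrow> y \<lesssim> z \<Longrightarrow> x \<squnion> y \<lesssim> z"
  unfolding lesssim_def using join_assoc[of z x y] by simp

lemma join_mono_left:
  assumes "a \<in> S" "b \<in> S" "w \<in> S" "a \<lesssim> b"
  shows "a \<squnion> w \<lesssim> b \<squnion> w"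
proof (rule join_below)
  show "a \<lesssim> b \<squnion> w"
    by (rule below_trans[OF assms(1,2) join_closed[OF assms(2,3)] assms(4) below_join1[OF assms(2,3)]])
  show "w \<lesssim> b \<squnion> w" by (rule below_join2[OF assms(2,3)])
qed (use assms join_closed in simp_all)

lemma below_join_enlarge:
  assumes S: "d \<in> S" "p \<in> S" "q \<in> S" "x \<in> S"
  shows "d \<lesssim> p \<squnion> x \<Longrightarrow> d \<lesssim> (p \<squnion> q) \<squnion> x" and "d \<lesssim> q \<squnion> x \<Longrightarrow> d \<lesssim> (p \<squnion> q) \<squnion> x"
proof -
  have pq: "p \<squnion> q \<in> S" using S by (intro join_closed)
  show "d \<lesssim> p \<squnion> x \<Longrightarrow> d \<lesssim> (p \<squnion> q) \<squnion> x"
    using below_trans[OF S(1) join_closed[OF S(2,4)] join_closed[OF pq S(4)]]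
      join_mono_left[OF S(2) pq S(4) below_join1[OF S(2,3)]] by blast
  show "d \<lesssim> q \<squnion> x \<Longrightarrow> d \<lesssim> (p \<squnion> q) \<squnion> x"
    using below_trans[OF S(1) join_closed[OF S(3,4)] join_closed[OF pq S(4)]]
      join_mono_left[OF S(3) pq S(4) below_join2[OF S(2,3)]] by blast
qed

lemma vee_below_join: "x \<in> S \<Longrightarrow> y \<in> S \<Longrightarrow> x \<curlyvee> y \<lesssim> x \<squnion> y"
  unfolding lesssim_def by (metis join_vee_join join_left_regular vee_closed join_closed)

lemma vee_eq_if_join_eq:
  assumes vw: "v \<in> S" "w \<in> S" and join_eq: "v \<squnion> w = w"
  shows "v \<curlyvee> w = w"
proof -
  define t where "t = v \<curlyvee> w"
  have t: "t \<in> S" unfolding t_def using vw by (rule vee_closed)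
  have "w \<squnion> v = w" using join_left_regular[OF vw] join_eq by simp
  then have wt: "w \<curlyvee> t = w" unfolding sqcup_def t_def using vee_commute vw by metis
  have tv: "t \<curlyvee> v = w" using join_eq unfolding sqcup_def t_def using vee_commute vw vee_closed by metis
  have "t = t \<squnion> t" using join_idem[OF t] by simp
  also have "\<dots> = (t \<squnion> v) \<curlyvee> (t \<squnion> w)" using join_vee_distrib[OF t vw] by (simp add: t_def)
  also have "\<dots> = w \<curlyvee> w" unfolding sqcup_def using tv wt vee_commute t vw by metis
  finally show ?thesis using vee_idem[OF vw(2)] by (simp add: t_def)
qed

lemma below_join_vee:
  assumes xy: "x \<in> S" "y \<in> S"
  shows "x \<lesssim> (x \<curlyvee> y) \<squnion> y"
proof -
  define u where "u = x \<curlyvee> y"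
  have u: "u \<in> S" unfolding u_def using xy by (rule vee_closed)
  have "y \<squnion> (y \<squnion> x) = y \<squnion> x" using join_assoc[OF xy(2) xy(2) xy(1)] join_idem[OF xy(2)] by simp
  then have absorb: "y \<curlyvee> (y \<squnion> x) = y \<squnion> x" using vee_eq_if_join_eq xy join_closed by blast
  have "y \<squnion> u = (y \<squnion> x) \<curlyvee> (y \<squnion> y)" unfolding u_def by (rule join_vee_distrib[OF xy(2) xy])
  also have "\<dots> = y \<squnion> x" using join_idem[OF xy(2)] absorb vee_commute join_closed xy by metis
  finally have "y \<squnion> u = y \<squnion> x" .
  moreover have "y \<squnion> u \<lesssim> u \<squnion> y"
    using join_below[OF xy(2) u join_closed[OF u xy(2)] below_join2[OF u xy(2)] below_join1[OF u xy(2)]] .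
  ultimately show ?thesis
    unfolding u_def[symmetric] using below_join2[OF xy(2) xy(1)] below_trans join_closed xy u by metis
qed

lemma eq_if_below_vee:
  assumes ab: "a \<in> S" "b \<in> S" and below: "a \<lesssim> b" "b \<lesssim> a" "a \<lesssim> a \<curlyvee> b"
  shows "a = b"
proof -
  define t where "t = a \<curlyvee> b"
  have t: "t \<in> S" unfolding t_def using ab by (rule vee_closed)
  have ab_join: "b \<squnion> a = b" "a \<squnion> b = a" using below(1,2) unfolding lesssim_def .
  have "t \<squnion> a = a" using join_vee_join[OF ab] ab_join unfolding t_def by simp
  moreover have "t \<squnion> a = t" using below(3) unfolding lesssim_def t_def .
  moreover have "t \<squnion> b = b" using join_vee_join[OF ab(2) ab(1)] ab_join vee_commute[OF ab] unfolding t_def by simp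
  moreover have "t \<squnion> b = t"
    using below_trans[OF ab(2) ab(1) t below(2)] below(3) unfolding t_def lesssim_def by simp
  ultimately show ?thesis by simp
qed

definition ideal :: "'a set \<Rightarrow> bool" where
  "ideal P \<longleftrightarrow> P \<subseteq> S \<and> (\<forall>x\<in>P. \<forall>y\<in>S. y \<lesssim> x \<longrightarrow> y \<in> P) \<and> (\<forall>x\<in>P. \<forall>y\<in>P. x \<squnion> y \<in> P)"

lemma ideal_principal: "b \<in> S \<Longrightarrow> ideal {y \<in> S. y \<lesssim> b}"
  unfolding ideal_def by (auto intro: below_trans join_below join_closed)

lemma ideal_Union_chain:
  assumes ideals: "\<And>P. P \<in> C \<Longrightarrow> ideal P" and chain: "\<And>P Q. P \<in> C \<Longrightarrow> Q \<in> C \<Longrightarrow> P \<subseteq> Q \<or> Q \<subseteq> P"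
  shows "ideal (\<Union>C)"
  unfolding ideal_def
proof (intro conjI ballI impI)
  show "\<Union>C \<subseteq> S" using ideals unfolding ideal_def by blast
next
  fix x y assume "x \<in> \<Union>C" "y \<in> S" "y \<lesssim> x"
  then show "y \<in> \<Union>C" using ideals unfolding ideal_def by blast
next
  fix x y assume "x \<in> \<Union>C" "y \<in> \<Union>C"
  then obtain P Q where PQ: "P \<in> C" "Q \<in> C" and "x \<in> P" "y \<in> Q" by blast
  then have "x \<in> P \<and> y \<in> P \<or> x \<in> Q \<and> y \<in> Q" using chain by blast
  then show "x \<squnion> y \<in> \<Union>C" using ideals[OF PQ(1)] ideals[OF PQ(2)] PQ unfolding ideal_def by blast
qed

lemma ideal_extension:
  assumes P: "ideal P" and x: "x \<in> S"
  shows "ideal {w \<in> S. \<exists>p\<in>P. w \<lesssim> p \<squnion> x}"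
  unfolding ideal_def
proof (intro conjI ballI impI)
  have PS: "P \<subseteq> S" using P unfolding ideal_def by blast
  show "{w \<in> S. \<exists>p\<in>P. w \<lesssim> p \<squnion> x} \<subseteq> S" by blast
  fix w y assume "w \<in> {w \<in> S. \<exists>p\<in>P. w \<lesssim> p \<squnion> x}" and y: "y \<in> S" "y \<lesssim> w"
  then obtain p where w: "w \<in> S" "p \<in> P" "w \<lesssim> p \<squnion> x" by blast
  have "y \<lesssim> p \<squnion> x" using below_trans[OF y(1) w(1) join_closed[OF _ x] y(2) w(3)] w(2) PS by blast
  then show "y \<in> {w \<in> S. \<exists>p\<in>P. w \<lesssim> p \<squnion> x}" using y(1) w(2) by blast
next
  have PS: "P \<subseteq> S" using P unfolding ideal_def by blast
  fix w y assume "w \<in> {w \<in> S. \<exists>p\<in>P. w \<lesssim> p \<squnion> x}" "y \<in> {w \<in> S. \<exists>p\<in>P. w \<lesssim> p \<squnion> x}"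
  then obtain p q where w: "w \<in> S" "p \<in> P" "w \<lesssim> p \<squnion> x" and y: "y \<in> S" "q \<in> P" "y \<lesssim> q \<squnion> x"
    by blast
  have pq: "p \<in> S" "q \<in> S" "p \<squnion> q \<in> P" using w y PS P unfolding ideal_def by blast+
  have "w \<lesssim> (p \<squnion> q) \<squnion> x" "y \<lesssim> (p \<squnion> q) \<squnion> x"
    using below_join_enlarge[OF w(1) pq(1,2) x] below_join_enlarge[OF y(1) pq(1,2) x] w(3) y(3) by blast+
  then have "w \<squnion> y \<lesssim> (p \<squnion> q) \<squnion> x"
    using join_below[OF w(1) y(1) join_closed[OF join_closed[OF pq(1,2)] x]] by blast
  then show "w \<squnion> y \<in> {w \<in> S. \<exists>p\<in>P. w \<lesssim> p \<squnion> x}" using join_closed[OF w(1) y(1)] pq(3) by blast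
qed

end

lemma vee_algebra_option_vee: "vee_algebra UNIV option_vee"
proof -
  have laws: "sqcup option_vee a (sqcup option_vee b c) = sqcup option_vee (sqcup option_vee a b) c"
    "sqcup option_vee a a = a"
    "sqcup option_vee a b = sqcup option_vee (sqcup option_vee a b) a"
    "option_vee a b = option_vee b a" "option_vee a a = a"
    "sqcup option_vee (option_vee a b) (sqcup option_vee a b) = sqcup option_vee a b"
    "sqcup option_vee a (option_vee b c) = option_vee (sqcup option_vee a b) (sqcup option_vee a c)"
    "lesssim option_vee d a \<and> lesssim option_vee d b \<and> lesssim option_vee d c \<and>
      lesssim option_vee d (option_vee a b) \<and> lesssim option_vee d (option_vee b c) \<longrightarrow>
      lesssim option_vee d (option_vee a c)"
    for a b c d :: "'v option"
    unfolding sqcup_def lesssim_def by (cases a; cases b; cases c; cases d; auto)+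
  show ?thesis unfolding vee_algebra_def closed_op_def using laws by blast
qed

lemma vee_algebra_if_separating_homs:
  fixes \<psi> :: "'j \<Rightarrow> 'a \<Rightarrow> 'b"
  assumes closed: "closed_op S op" and target: "vee_algebra T opT"
    and into: "\<And>j x. j \<in> J \<Longrightarrow> x \<in> S \<Longrightarrow> \<psi> j x \<in> T"
    and hom: "\<And>j x y. j \<in> J \<Longrightarrow> x \<in> S \<Longrightarrow> y \<in> S \<Longrightarrow> \<psi> j (op x y) = opT (\<psi> j x) (\<psi> j y)"
    and separating: "\<And>x y. x \<in> S \<Longrightarrow> y \<in> S \<Longrightarrow> (\<And>j. j \<in> J \<Longrightarrow> \<psi> j x = \<psi> j y) \<Longrightarrow> x = y"
  shows "vee_algebra S op"
proof -
  interpret T: vee_alg T opT by (rule vee_alg.intro) (rule target)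
  have c: "op x y \<in> S" if "x \<in> S" "y \<in> S" for x y
    using closed that unfolding closed_op_def by blast
  have cs: "sqcup op x y \<in> S" if "x \<in> S" "y \<in> S" for x y
    unfolding sqcup_def using c that by blast
  have hom_sqcup: "\<psi> j (sqcup op x y) = sqcup opT (\<psi> j x) (\<psi> j y)" if "j \<in> J" "x \<in> S" "y \<in> S" for j x y
    unfolding sqcup_def using hom c that by simp
  have below_iff: "lesssim op x y \<longleftrightarrow> (\<forall>j\<in>J. lesssim opT (\<psi> j x) (\<psi> j y))" if "x \<in> S" "y \<in> S" for x y
    unfolding lesssim_def using separating[OF cs[OF that(2,1)] that(2)] hom_sqcup that by metis
  show ?thesis unfolding vee_algebra_def
  proof (intro conjI ballI impI)
    show "closed_op S op" by (rule closed)
  next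
    fix a b c assume abc: "a \<in> S" "b \<in> S" "c \<in> S"
    show "sqcup op a (sqcup op b c) = sqcup op (sqcup op a b) c"
      by (rule separating) (simp_all add: abc cs hom_sqcup into T.join_assoc)
    show "sqcup op a (op b c) = op (sqcup op a b) (sqcup op a c)"
      by (rule separating) (simp_all add: abc c cs hom_sqcup hom into T.join_vee_distrib)
  next
    fix a assume a: "a \<in> S"
    show "sqcup op a a = a" by (rule separating) (simp_all add: a cs hom_sqcup into T.join_idem)
    show "op a a = a" by (rule separating) (simp_all add: a c hom into T.vee_idem)
  next
    fix a b assume ab: "a \<in> S" "b \<in> S"
    show "sqcup op a b = sqcup op (sqcup op a b) a"
      by (rule separating) (simp_all add: ab cs hom_sqcup into T.join_left_regular)
    show "op a b = op b a"
      by (rule separating) (simp_all add: ab c hom into T.vee_commute[of "\<psi> _ a"])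
    show "sqcup op (op a b) (sqcup op a b) = sqcup op a b"
      by (rule separating) (simp_all add: ab c cs hom_sqcup hom into T.join_vee_join)
  next
    fix a b c d assume abcd: "a \<in> S" "b \<in> S" "c \<in> S" "d \<in> S"
    assume below: "lesssim op d a \<and> lesssim op d b \<and> lesssim op d c \<and>
      lesssim op d (op a b) \<and> lesssim op d (op b c)"
    show "lesssim op d (op a c)"
    proof (subst below_iff[OF abcd(4) c[OF abcd(1,3)]], intro ballI)
      fix j assume j: "j \<in> J"
      have lift: "lesssim opT (\<psi> j d) (\<psi> j x)" if "x \<in> S" "lesssim op d x" for x
        using below_iff[OF abcd(4) that(1)] that(2) j by blast
      have "lesssim opT (\<psi> j d) (opT (\<psi> j a) (\<psi> j c))"
        by (rule T.below_vee_trans[OF into[OF j abcd(1)] into[OF j abcd(2)] into[OF j abcd(3)] into[OF j abcd(4)]])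
          (use below lift[of a] lift[of b] lift[of c] lift[of "op a b"] lift[of "op b c"] in
            \<open>simp_all add: abcd c hom j\<close>)
      then show "lesssim opT (\<psi> j d) (\<psi> j (op a c))" by (simp add: hom j abcd)
    qed
  qed
qed

definition pfun_lookup :: "('x \<times> 'y) set \<Rightarrow> 'x \<Rightarrow> 'y option" where
  "pfun_lookup f x = (if x \<in> Domain f then Some (THE y. (x, y) \<in> f) else None)"

lemma Par_iff: "f \<in> Par X Y \<longleftrightarrow> f \<subseteq> X \<times> Y \<and> single_valued f"
  unfolding Par_def single_valued_def by blast

lemma pfun_lookup_eq_Some_iff:
  assumes "single_valued f"
  shows "pfun_lookup f x = Some y \<longleftrightarrow> (x, y) \<in> f"
proof
  have unique: "z = z'" if "(x, z) \<in> f" "(x, z') \<in> f" for z z'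
    using assms that by (rule single_valuedD)
  assume "pfun_lookup f x = Some y"
  then have "x \<in> Domain f" "y = (THE y. (x, y) \<in> f)"
    unfolding pfun_lookup_def by (auto split: if_splits)
  then show "(x, y) \<in> f" using unique by (metis DomainE theI)
next
  assume xy: "(x, y) \<in> f"
  then have "(THE y. (x, y) \<in> f) = y" using assms by (blast dest: single_valuedD)
  then show "pfun_lookup f x = Some y" using xy unfolding pfun_lookup_def by auto
qed

lemma pfun_lookup_eq_None_iff: "pfun_lookup f x = None \<longleftrightarrow> x \<notin> Domain f"
  unfolding pfun_lookup_def by simp

lemma single_valued_rvee: "single_valued f \<Longrightarrow> single_valued g \<Longrightarrow> single_valued (rvee f g)"
  unfolding single_valued_def rvee_def pminus_def by blast

lemma rvee_in_Par: "f \<in> Par X Y \<Longrightarrow> g \<in> Par X Y \<Longrightarrow> rvee f g \<in> Par X Y"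
  using single_valued_rvee unfolding Par_iff rvee_def pminus_def by blast

lemma pfun_lookup_rvee:
  assumes f: "single_valued f" and g: "single_valued g"
  shows "pfun_lookup (rvee f g) x = option_vee (pfun_lookup f x) (pfun_lookup g x)"
proof -
  have "(x, y) \<in> rvee f g \<longleftrightarrow> option_vee (pfun_lookup f x) (pfun_lookup g x) = Some y" for y
    unfolding option_vee_eq_Some_iff pfun_lookup_eq_Some_iff[OF f] pfun_lookup_eq_Some_iff[OF g]
      pfun_lookup_eq_None_iff rvee_def pminus_def by blast
  then have "pfun_lookup (rvee f g) x = Some y \<longleftrightarrow> option_vee (pfun_lookup f x) (pfun_lookup g x) = Some y" for y
    using pfun_lookup_eq_Some_iff[OF single_valued_rvee[OF f g]] by blast
  then show ?thesis by (metis option.exhaust)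
qed

lemma Par_eqI:
  assumes f: "f \<in> Par X Y" and g: "g \<in> Par X Y"
    and lookup: "\<And>x. x \<in> X \<Longrightarrow> pfun_lookup f x = pfun_lookup g x"
  shows "f = g"
proof (intro set_eqI)
  fix p :: "'a \<times> 'b"
  obtain x y where p: "p = (x, y)" by force
  have "(x, y) \<in> f \<longleftrightarrow> (x, y) \<in> g"
  proof (cases "x \<in> X")
    case True
    then show ?thesis using lookup f g pfun_lookup_eq_Some_iff unfolding Par_iff by metis
  next
    case False
    then show ?thesis using f g unfolding Par_iff by blast
  qed
  then show "p \<in> f \<longleftrightarrow> p \<in> g" unfolding p .
qed

lemma vee_algebra_if_functional:
  assumes closed: "closed_op S op" and rep: "functional_rep S op X Y A h"
  shows "vee_algebra S op"
proof -
  have Par: "h s \<in> Par X Y" if "s \<in> S" for s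
    using rep that unfolding functional_rep_def iso_onto_def bij_betw_def by blast
  have hom: "h (op s t) = rvee (h s) (h t)" if "s \<in> S" "t \<in> S" for s t
    using rep that unfolding functional_rep_def iso_onto_def by blast
  have inj: "inj_on h S"
    using rep unfolding functional_rep_def iso_onto_def bij_betw_def by blast
  have sv: "single_valued (h s)" if "s \<in> S" for s
    using Par[OF that] by (simp add: Par_iff)
  show ?thesis
  proof (rule vee_algebra_if_separating_homs[OF closed vee_algebra_option_vee,
        where J = X and \<psi> = "\<lambda>x s. pfun_lookup (h s) x"])
    fix x s t assume st: "s \<in> S" "t \<in> S"
    show "pfun_lookup (h (op s t)) x = option_vee (pfun_lookup (h s) x) (pfun_lookup (h t) x)"
      using hom[OF st] pfun_lookup_rvee[OF sv[OF st(1)] sv[OF st(2)]] by simp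
  next
    fix s t assume st: "s \<in> S" "t \<in> S" and "\<And>x. x \<in> X \<Longrightarrow> pfun_lookup (h s) x = pfun_lookup (h t) x"
    then have "h s = h t" using Par_eqI Par by blast
    then show "s = t" using inj st unfolding inj_on_def by blast
  qed simp
qed

lemma flat_algebra_embeds_option:
  assumes "flat_algebra F opF"
  shows "\<exists>e :: 'b \<Rightarrow> 'b option. inj_on e F \<and> (\<forall>a\<in>F. \<forall>b\<in>F. e (opF a b) = option_vee (e a) (e b))"
proof -
  obtain z where z: "z \<in> F" and flat: "\<And>a b. a \<in> F \<Longrightarrow> b \<in> F \<Longrightarrow>
      (a \<noteq> b \<and> a \<noteq> z \<and> b \<noteq> z \<longrightarrow> opF a b = z) \<and> opF a a = a \<and> opF a z = a \<and> opF z a = a"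
    using assms unfolding flat_algebra_def by blast
  define e where "e a = (if a = z then None else Some a)" for a
  have "e (opF a b) = option_vee (e a) (e b)" if "a \<in> F" "b \<in> F" for a b
    using flat[OF that] flat[OF that(1) that(1)] flat[OF that(2) that(2)] z unfolding e_def by (cases "a = z"; cases "b = z"; auto)
  moreover have "inj_on e F" unfolding e_def by (rule inj_onI) (auto split: if_splits)
  ultimately show ?thesis by blast
qed

lemma vee_algebra_if_subdirect_flat:
  fixes B :: "('i \<Rightarrow> 'b) set"
  assumes closed: "closed_op S op" and sub: "subdirect_product_of_flat B I F Op"
    and iso: "iso_onto S op B (prod_op I Op) h"
  shows "vee_algebra S op"
proof -
  have "\<exists>e :: 'b \<Rightarrow> 'b option. inj_on e (F i) \<and>
      (\<forall>a\<in>F i. \<forall>b\<in>F i. e (Op i a b) = option_vee (e a) (e b))" if "i \<in> I" for i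
    using sub that flat_algebra_embeds_option[of "F i" "Op i"]
    unfolding subdirect_product_of_flat_def by blast
  then have "\<forall>i\<in>I. \<exists>e :: 'b \<Rightarrow> 'b option. inj_on e (F i) \<and>
      (\<forall>a\<in>F i. \<forall>b\<in>F i. e (Op i a b) = option_vee (e a) (e b))" by blast
  from bchoice[OF this] obtain e :: "'i \<Rightarrow> 'b \<Rightarrow> 'b option" where e: "\<forall>i\<in>I. inj_on (e i) (F i) \<and>
      (\<forall>a\<in>F i. \<forall>b\<in>F i. e i (Op i a b) = option_vee (e i a) (e i b))" by blast
  have inj_e: "inj_on (e i) (F i)" if "i \<in> I" for i using e that by blast
  have hom_e: "e i (Op i a b) = option_vee (e i a) (e i b)" if "i \<in> I" "a \<in> F i" "b \<in> F i" for i a b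
    using e that by blast
  have PiE: "h s \<in> PiE I F" if "s \<in> S" for s
    using sub iso that unfolding subdirect_product_of_flat_def iso_onto_def bij_betw_def by blast
  have hom: "h (op s t) i = Op i (h s i) (h t i)" if "s \<in> S" "t \<in> S" "i \<in> I" for s t i
    using iso that unfolding iso_onto_def prod_op_def by simp
  have inj: "inj_on h S" using iso unfolding iso_onto_def bij_betw_def by blast
  show ?thesis
  proof (rule vee_algebra_if_separating_homs[OF closed vee_algebra_option_vee,
        where J = I and \<psi> = "\<lambda>i s. e i (h s i)"])
    fix i s t assume i: "i \<in> I" and st: "s \<in> S" "t \<in> S"
    show "e i (h (op s t) i) = option_vee (e i (h s i)) (e i (h t i))"
      using hom[OF st i] hom_e[OF i PiE_mem[OF PiE[OF st(1)] i] PiE_mem[OF PiE[OF st(2)] i]] by simp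
  next
    fix s t assume st: "s \<in> S" "t \<in> S" and "\<And>i. i \<in> I \<Longrightarrow> e i (h s i) = e i (h t i)"
    then have "h s i = h t i" if "i \<in> I" for i
      using inj_e[OF that] PiE[OF st(1)] PiE[OF st(2)] that unfolding inj_on_def by (meson PiE_mem)
    then have "h s = h t" using PiE_ext PiE st by metis
    then show "s = t" using inj st unfolding inj_on_def by blast
  qed simp
qed

definition vee_homs :: "'a set \<Rightarrow> ('a \<Rightarrow> 'a \<Rightarrow> 'a) \<Rightarrow> ('a \<Rightarrow> 'v option) set" where
  "vee_homs S op = {\<phi>. (\<forall>x\<in>S. \<forall>y\<in>S. \<phi> (op x y) = option_vee (\<phi> x) (\<phi> y)) \<and> None \<in> \<phi> ` S}"

locale avoiding_ideal = vee_alg +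
  fixes P :: "'a set" and d :: 'a
  assumes ideal: "ideal P" and d_in: "d \<in> S" and d_notin: "d \<notin> P"
    and maximal: "\<And>x. x \<in> S \<Longrightarrow> x \<notin> P \<Longrightarrow> \<exists>p\<in>P. d \<lesssim> p \<squnion> x"
    \<comment> \<open>i.e. \<open>P\<close> is maximal among the ideals avoiding \<open>d\<close>\<close>
begin

lemma ideal_subset: "P \<subseteq> S"
  and ideal_down: "x \<in> P \<Longrightarrow> y \<in> S \<Longrightarrow> y \<lesssim> x \<Longrightarrow> y \<in> P"
  and ideal_join: "x \<in> P \<Longrightarrow> y \<in> P \<Longrightarrow> x \<squnion> y \<in> P"
  using ideal unfolding ideal_def by blast+

lemma ideal_nonempty: "P \<noteq> {}"
  using maximal[OF d_in d_notin] by blast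

lemma maximal_finite:
  assumes "finite W" "W \<subseteq> S - P"
  shows "\<exists>p\<in>P. \<forall>w\<in>W. d \<lesssim> p \<squnion> w"
  using assms
proof (induction W rule: finite_induct)
  case empty
  then show ?case using ideal_nonempty by blast
next
  case (insert w W)
  then obtain p q where p: "p \<in> P" "\<forall>v\<in>W. d \<lesssim> p \<squnion> v" and q: "q \<in> P" "d \<lesssim> q \<squnion> w"
    using maximal by blast
  have pq: "p \<in> S" "q \<in> S" using p q ideal_subset by blast+
  have "d \<lesssim> (p \<squnion> q) \<squnion> v" if "v \<in> insert w W" for v
    using that p q insert.prems below_join_enlarge[OF d_in pq] by blast
  then show ?case using ideal_join p q by blast
qed

lemma vee_in_ideal: "x \<in> P \<Longrightarrow> y \<in> P \<Longrightarrow> x \<curlyvee> y \<in> P"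
  using ideal_down[OF ideal_join vee_closed vee_below_join] ideal_subset by blast

lemma vee_notin_ideal:
  assumes x: "x \<in> S" "x \<notin> P" and y: "y \<in> P"
  shows "x \<curlyvee> y \<notin> P"
proof
  assume "x \<curlyvee> y \<in> P"
  then have "(x \<curlyvee> y) \<squnion> y \<in> P" using ideal_join y by blast
  then show False using ideal_down below_join_vee ideal_subset x y by blast
qed

text \<open>The quasi-identity of \<open>\<curlyvee>\<close>-algebras is used exactly here.\<close>
lemma vee_notin_ideal_trans:
  assumes xyz: "x \<in> S - P" "y \<in> S - P" "z \<in> S - P"
    and xy: "x \<curlyvee> y \<notin> P" and yz: "y \<curlyvee> z \<notin> P"
  shows "x \<curlyvee> z \<notin> P"
proof
  assume xz: "x \<curlyvee> z \<in> P"
  have "finite {x, y, z, x \<curlyvee> y, y \<curlyvee> z}" by simp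
  moreover have "{x, y, z, x \<curlyvee> y, y \<curlyvee> z} \<subseteq> S - P" using xyz xy yz vee_closed by blast
  ultimately obtain p where p: "p \<in> P" and below: "\<forall>w\<in>{x, y, z, x \<curlyvee> y, y \<curlyvee> z}. d \<lesssim> p \<squnion> w"
    using maximal_finite by blast
  have S: "p \<in> S" "x \<in> S" "y \<in> S" "z \<in> S" using p xyz ideal_subset by blast+
  have "d \<lesssim> (p \<squnion> x) \<curlyvee> (p \<squnion> z)"
  proof (rule below_vee_trans[OF join_closed[OF S(1,2)] join_closed[OF S(1,3)] join_closed[OF S(1,4)] d_in])
    show "d \<lesssim> p \<squnion> x" "d \<lesssim> p \<squnion> y" "d \<lesssim> p \<squnion> z" using below by simp_all
    show "d \<lesssim> (p \<squnion> x) \<curlyvee> (p \<squnion> y)" using below join_vee_distrib[OF S(1,2,3)] by simp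
    show "d \<lesssim> (p \<squnion> y) \<curlyvee> (p \<squnion> z)" using below join_vee_distrib[OF S(1,3,4)] by simp
  qed
  then have "d \<lesssim> p \<squnion> (x \<curlyvee> z)" using join_vee_distrib[OF S(1,2,4)] by simp
  then show False using ideal_down[OF ideal_join[OF p xz]] d_in d_notin by blast
qed

text \<open>\<open>same_class\<close> is an equivalence relation on \<open>S - P\<close>; transitivity is \<open>vee_notin_ideal_trans\<close>.\<close>
definition same_class :: "'a \<Rightarrow> 'a \<Rightarrow> bool" where
  "same_class x y \<longleftrightarrow> y \<in> S - P \<and> x \<curlyvee> y \<notin> P"

definition class_of :: "'a \<Rightarrow> 'a option" where
  "class_of x = (if x \<in> S - P then Some (SOME y. same_class x y) else None)"

lemma class_of_eq_None_iff: "x \<in> S \<Longrightarrow> class_of x = None \<longleftrightarrow> x \<in> P"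
  unfolding class_of_def by simp

lemma same_class_refl: "u \<in> S - P \<Longrightarrow> same_class u u"
  using vee_idem unfolding same_class_def by simp

lemma same_class_trans:
  assumes "x \<in> S - P" "y \<in> S - P" "x \<curlyvee> y \<notin> P" "same_class y w"
  shows "same_class x w"
  using assms vee_notin_ideal_trans unfolding same_class_def by blast

lemma class_of_eq_iff:
  assumes x: "x \<in> S - P" and y: "y \<in> S - P"
  shows "class_of x = class_of y \<longleftrightarrow> x \<curlyvee> y \<notin> P"
proof
  define r where "r = (SOME w. same_class x w)"
  assume "class_of x = class_of y"
  then have "r = (SOME w. same_class y w)" using x y by (simp add: class_of_def r_def)
  then have "same_class x r" "same_class y r"
    unfolding r_def using someI same_class_refl x y by metis+
  then have "r \<in> S - P" "x \<curlyvee> r \<notin> P" "r \<curlyvee> y \<notin> P"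
    using vee_commute y unfolding same_class_def by auto
  then show "x \<curlyvee> y \<notin> P" using vee_notin_ideal_trans x y by blast
next
  assume xy: "x \<curlyvee> y \<notin> P"
  then have "y \<curlyvee> x \<notin> P" using vee_commute x y by auto
  then have "same_class x = same_class y"
    using same_class_trans x y xy by blast
  then show "class_of x = class_of y" using x y by (simp add: class_of_def)
qed

lemma class_of_vee_absorb:
  assumes x: "x \<in> S - P" and y: "y \<in> S" and xy: "x \<curlyvee> y \<notin> P"
  shows "class_of (x \<curlyvee> y) = class_of x"
proof -
  have "x \<squnion> y \<notin> P" using ideal_down below_join1 join_closed x y by blast
  then have "(x \<curlyvee> y) \<curlyvee> x \<notin> P" using vee_commute vee_closed x y unfolding sqcup_def by (metis DiffD1)
  then show ?thesis using class_of_eq_iff vee_closed x y xy by blast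
qed

lemma class_of_hom:
  assumes x: "x \<in> S" and y: "y \<in> S"
  shows "class_of (x \<curlyvee> y) = option_vee (class_of x) (class_of y)"
proof -
  have Some: "\<exists>a. class_of u = Some a" if "u \<in> S - P" for u
    using that by (simp add: class_of_def)
  consider "x \<in> P" "y \<in> P" | "x \<notin> P" "y \<in> P" | "x \<in> P" "y \<notin> P" | "x \<notin> P" "y \<notin> P"
    by blast
  then show ?thesis
  proof cases
    case 1
    then show ?thesis using vee_in_ideal by (simp add: class_of_def)
  next
    case 2
    then show ?thesis
      using class_of_vee_absorb vee_notin_ideal x y by (simp add: class_of_def[of y])
  next
    case 3
    then have "class_of (y \<curlyvee> x) = class_of y"
      using class_of_vee_absorb vee_notin_ideal x y by blast
    then show ?thesis using 3 by (simp add: vee_commute[OF x y] class_of_def[of x])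
  next
    case 4
    then obtain a b where ab: "class_of x = Some a" "class_of y = Some b" using Some x y by blast
    show ?thesis
    proof (cases "x \<curlyvee> y \<in> P")
      case True
      then have "a \<noteq> b" using class_of_eq_iff[of x y] x y 4 ab by auto
      then show ?thesis using True class_of_eq_None_iff vee_closed x y ab by simp
    next
      case False
      then have "a = b" using class_of_eq_iff[of x y] x y 4 ab by auto
      then show ?thesis using False class_of_vee_absorb x y 4 ab by simp
    qed
  qed
qed

lemma class_of_in_vee_homs: "class_of \<in> vee_homs S op"
proof -
  obtain p where "p \<in> P" using ideal_nonempty by blast
  then have "None \<in> class_of ` S" using class_of_eq_None_iff ideal_subset by (metis image_eqI subsetD)
  then show ?thesis unfolding vee_homs_def using class_of_hom by blast
qed

end

context vee_alg
begin

lemma exists_avoiding_ideal: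
  assumes b: "b \<in> S" and d: "d \<in> S" and not_below: "\<not> d \<lesssim> b"
  obtains P where "avoiding_ideal S op P d" "b \<in> P"
proof -
  let ?A = "{P. ideal P \<and> b \<in> P \<and> d \<notin> P}"
  have "{y \<in> S. y \<lesssim> b} \<in> ?A" using ideal_principal below_refl b d not_below by auto
  then have nonempty: "?A \<noteq> {}" by blast
  have chains: "\<Union>C \<in> ?A" if "C \<noteq> {}" "subset.chain ?A C" for C
  proof -
    have "C \<subseteq> ?A" "\<And>P Q. P \<in> C \<Longrightarrow> Q \<in> C \<Longrightarrow> P \<subseteq> Q \<or> Q \<subseteq> P"
      using that(2) unfolding subset_chain_def by blast+
    then have "ideal (\<Union>C)" using ideal_Union_chain by blast
    then show ?thesis using \<open>C \<subseteq> ?A\<close> that(1) by blast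
  qed
  from subset_Zorn_nonempty[OF nonempty chains]
  obtain M where M: "M \<in> ?A" and M_max: "\<And>X. X \<in> ?A \<Longrightarrow> M \<subseteq> X \<Longrightarrow> X = M"
    by blast
  have "avoiding_ideal S op M d"
  proof (unfold_locales)
    show "ideal M" "d \<in> S" "d \<notin> M" using M d by blast+
    fix x assume x: "x \<in> S" "x \<notin> M"
    let ?E = "{w \<in> S. \<exists>p\<in>M. w \<lesssim> p \<squnion> x}"
    have MS: "M \<subseteq> S" using M unfolding ideal_def by blast
    have "M \<subseteq> ?E" using below_join1 MS x by blast
    moreover have "x \<in> ?E" using below_join2 M MS x by blast
    ultimately have "?E \<notin> ?A" using M_max x by blast
    moreover have "ideal ?E" using ideal_extension M x by blast
    ultimately have "d \<in> ?E" using M \<open>M \<subseteq> ?E\<close> by blast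
    then show "\<exists>p\<in>M. d \<lesssim> p \<squnion> x" by blast
  qed
  then show thesis using that M by blast
qed

lemma exists_separating_vee_hom_if_not_below:
  assumes s: "s \<in> S" and t: "t \<in> S" and not_below: "\<not> s \<lesssim> t"
  shows "\<exists>\<phi>\<in>(vee_homs S op :: ('a \<Rightarrow> 'a option) set). \<phi> s \<noteq> \<phi> t"
proof -
  obtain P where P: "avoiding_ideal S op P s" "t \<in> P" using exists_avoiding_ideal t s not_below by blast
  then interpret avoiding_ideal S op P s by simp
  have "class_of t \<noteq> class_of s" using class_of_eq_None_iff[OF s] class_of_eq_None_iff[OF t] P(2) d_notin by auto
  then show ?thesis using class_of_in_vee_homs by metis
qed

lemma exists_separating_vee_hom:
  assumes s: "s \<in> S" and t: "t \<in> S" and "s \<noteq> t"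
  shows "\<exists>\<phi>\<in>(vee_homs S op :: ('a \<Rightarrow> 'a option) set). \<phi> s \<noteq> \<phi> t"
proof (cases "s \<lesssim> t \<and> t \<lesssim> s")
  case False
  then show ?thesis using exists_separating_vee_hom_if_not_below s t by metis
next
  case True
  then have not_below: "\<not> s \<lesssim> s \<curlyvee> t" using eq_if_below_vee s t \<open>s \<noteq> t\<close> by blast
  obtain P where P: "avoiding_ideal S op P s" "s \<curlyvee> t \<in> P"
    using exists_avoiding_ideal vee_closed s t not_below by metis
  then interpret avoiding_ideal S op P s by simp
  have "t \<notin> P" using ideal_down True s d_notin by blast
  then have "class_of s \<noteq> class_of t" using class_of_eq_iff P(2) s t d_notin by blast
  then show ?thesis using class_of_in_vee_homs by blast
qed

end

definition eval_graph :: "('a \<Rightarrow> 'v option) set \<Rightarrow> 'a \<Rightarrow> (('a \<Rightarrow> 'v option) \<times> 'v) set" where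
  "eval_graph \<Phi> s = {(\<phi>, v). \<phi> \<in> \<Phi> \<and> \<phi> s = Some v}"

lemma single_valued_eval_graph: "single_valued (eval_graph \<Phi> s)"
  unfolding single_valued_def eval_graph_def by auto

lemma eval_graph_in_Par: "eval_graph \<Phi> s \<in> Par \<Phi> UNIV"
  using single_valued_eval_graph unfolding Par_iff eval_graph_def by auto

lemma pfun_lookup_eval_graph: "pfun_lookup (eval_graph \<Phi> s) \<phi> = (if \<phi> \<in> \<Phi> then \<phi> s else None)"
proof -
  note sv = single_valued_eval_graph[of \<Phi> s]
  show ?thesis
  proof (cases "\<phi> \<in> \<Phi> \<and> \<phi> s \<noteq> None")
    case True
    then show ?thesis using pfun_lookup_eq_Some_iff[OF sv] by (auto simp: eval_graph_def)
  next
    case False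
    then have "\<phi> \<notin> Domain (eval_graph \<Phi> s)" by (auto simp: eval_graph_def)
    then show ?thesis using False pfun_lookup_eq_None_iff[of "eval_graph \<Phi> s" \<phi>] by auto
  qed
qed

lemma functional_rep_eval_graph:
  assumes closed: "closed_op S op"
    and hom: "\<And>\<phi> x y. \<phi> \<in> \<Phi> \<Longrightarrow> x \<in> S \<Longrightarrow> y \<in> S \<Longrightarrow> \<phi> (op x y) = option_vee (\<phi> x) (\<phi> y)"
    and separating: "\<And>x y. x \<in> S \<Longrightarrow> y \<in> S \<Longrightarrow> (\<And>\<phi>. \<phi> \<in> \<Phi> \<Longrightarrow> \<phi> x = \<phi> y) \<Longrightarrow> x = y"
  shows "functional_rep S op \<Phi> UNIV (eval_graph \<Phi> ` S) (eval_graph \<Phi>)"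
proof -
  have graph_hom: "eval_graph \<Phi> (op s t) = rvee (eval_graph \<Phi> s) (eval_graph \<Phi> t)"
    if "s \<in> S" "t \<in> S" for s t
  proof (rule Par_eqI[OF eval_graph_in_Par rvee_in_Par[OF eval_graph_in_Par eval_graph_in_Par]])
    fix \<phi> assume \<phi>: "\<phi> \<in> \<Phi>"
    have "pfun_lookup (rvee (eval_graph \<Phi> s) (eval_graph \<Phi> t)) \<phi> = option_vee (\<phi> s) (\<phi> t)"
      using pfun_lookup_rvee[OF single_valued_eval_graph[of \<Phi> s] single_valued_eval_graph[of \<Phi> t]] \<phi>
      by (simp add: pfun_lookup_eval_graph)
    then show "pfun_lookup (eval_graph \<Phi> (op s t)) \<phi> =
        pfun_lookup (rvee (eval_graph \<Phi> s) (eval_graph \<Phi> t)) \<phi>"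
      using hom[OF \<phi> that] \<phi> by (simp add: pfun_lookup_eval_graph)
  qed
  have "inj_on (eval_graph \<Phi>) S"
  proof (rule inj_onI)
    fix s t assume st: "s \<in> S" "t \<in> S" and "eval_graph \<Phi> s = eval_graph \<Phi> t"
    then have "pfun_lookup (eval_graph \<Phi> s) \<phi> = pfun_lookup (eval_graph \<Phi> t) \<phi>" for \<phi> by simp
    then show "s = t" using separating[OF st] by (metis pfun_lookup_eval_graph)
  qed
  moreover have "rvee f g \<in> eval_graph \<Phi> ` S" if fg: "f \<in> eval_graph \<Phi> ` S" "g \<in> eval_graph \<Phi> ` S" for f g
  proof -
    obtain s t where st: "s \<in> S" "t \<in> S" and "f = eval_graph \<Phi> s" "g = eval_graph \<Phi> t"
      using fg by blast
    moreover have "op s t \<in> S" using closed st unfolding closed_op_def by blast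
    ultimately show ?thesis using graph_hom[OF st] by auto
  qed
  ultimately show ?thesis
    unfolding functional_rep_def iso_onto_def bij_betw_def
    using eval_graph_in_Par graph_hom by auto
qed

lemma subdirect_product_of_flat_restrict:
  assumes closed: "closed_op S op"
    and hom: "\<And>\<phi> x y. \<phi> \<in> \<Phi> \<Longrightarrow> x \<in> S \<Longrightarrow> y \<in> S \<Longrightarrow> \<phi> (op x y) = option_vee (\<phi> x) (\<phi> y)"
    and separating: "\<And>x y. x \<in> S \<Longrightarrow> y \<in> S \<Longrightarrow> (\<And>\<phi>. \<phi> \<in> \<Phi> \<Longrightarrow> \<phi> x = \<phi> y) \<Longrightarrow> x = y"
    and zero: "\<And>\<phi>. \<phi> \<in> \<Phi> \<Longrightarrow> None \<in> \<phi> ` S"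
  defines "h \<equiv> \<lambda>s. restrict (\<lambda>\<phi>. \<phi> s) \<Phi>"
  shows "subdirect_product_of_flat (h ` S) \<Phi> (\<lambda>\<phi>. \<phi> ` S) (\<lambda>_. option_vee)
    \<and> iso_onto S op (h ` S) (prod_op \<Phi> (\<lambda>_. option_vee)) h"
proof
  have closed': "op s t \<in> S" if "s \<in> S" "t \<in> S" for s t
    using closed that unfolding closed_op_def by blast
  have h_hom: "h (op s t) = prod_op \<Phi> (\<lambda>_. option_vee) (h s) (h t)" if "s \<in> S" "t \<in> S" for s t
    using hom that unfolding h_def prod_op_def by auto
  show "subdirect_product_of_flat (h ` S) \<Phi> (\<lambda>\<phi>. \<phi> ` S) (\<lambda>_. option_vee)"
    unfolding subdirect_product_of_flat_def
  proof (intro conjI ballI)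
    show "flat_algebra (\<phi> ` S) option_vee" if "\<phi> \<in> \<Phi>" for \<phi>
      using zero[OF that] by (rule flat_algebra_option_vee)
    show "h ` S \<subseteq> PiE \<Phi> (\<lambda>\<phi>. \<phi> ` S)" unfolding h_def by auto
    show "(\<lambda>p. p \<phi>) ` h ` S = \<phi> ` S" if "\<phi> \<in> \<Phi>" for \<phi>
      using that unfolding h_def by (auto simp: image_image)
    fix p q assume "p \<in> h ` S" "q \<in> h ` S"
    then obtain s t where st: "s \<in> S" "t \<in> S" and "p = h s" "q = h t" by blast
    then show "prod_op \<Phi> (\<lambda>_. option_vee) p q \<in> h ` S"
      using h_hom[OF st] imageI[OF closed'[OF st], of h] by simp
  qed
  have "inj_on h S"
  proof (rule inj_onI)
    fix s t assume st: "s \<in> S" "t \<in> S" and eq: "h s = h t"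
    have "\<phi> s = \<phi> t" if "\<phi> \<in> \<Phi>" for \<phi>
      using fun_cong[OF eq, of \<phi>] that unfolding h_def by simp
    then show "s = t" using separating[OF st] by blast
  qed
  then show "iso_onto S op (h ` S) (prod_op \<Phi> (\<lambda>_. option_vee)) h"
    unfolding iso_onto_def bij_betw_def using h_hom by blast
qed

lemma vee_homs_hom:
  "\<phi> \<in> vee_homs S op \<Longrightarrow> x \<in> S \<Longrightarrow> y \<in> S \<Longrightarrow> \<phi> (op x y) = option_vee (\<phi> x) (\<phi> y)"
  unfolding vee_homs_def by blast

lemma vee_homs_zero: "\<phi> \<in> vee_homs S op \<Longrightarrow> None \<in> \<phi> ` S"
  unfolding vee_homs_def by blast

lemma vee_homs_separating:
  assumes "vee_algebra S op" "s \<in> S" "t \<in> S"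
    and "\<And>\<phi> :: 'a \<Rightarrow> 'a option. \<phi> \<in> vee_homs S op \<Longrightarrow> \<phi> s = \<phi> t"
  shows "s = t"
proof (rule ccontr)
  assume "s \<noteq> t"
  then obtain \<phi> :: "'a \<Rightarrow> 'a option" where "\<phi> \<in> vee_homs S op" "\<phi> s \<noteq> \<phi> t"
    using vee_alg.exists_separating_vee_hom[OF vee_alg.intro[OF assms(1)] assms(2,3)] by blast
  then show False using assms(4) by blast
qed

lemma closed_op_if_vee_algebra: "vee_algebra S op \<Longrightarrow> closed_op S op"
  unfolding vee_algebra_def by blast

lemma functional_rep_if_vee_algebra:
  assumes "vee_algebra S op"
  shows "functional_rep S op (vee_homs S op) (UNIV :: 'a set)
    (eval_graph (vee_homs S op) ` S) (eval_graph (vee_homs S op :: ('a \<Rightarrow> 'a option) set))"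
proof (rule functional_rep_eval_graph)
  show "closed_op S op" using assms by (rule closed_op_if_vee_algebra)
qed (auto intro: vee_homs_hom vee_homs_separating[OF assms])

lemma subdirect_product_if_vee_algebra:
  assumes "vee_algebra S op"
  defines "\<Phi> \<equiv> vee_homs S op :: ('a \<Rightarrow> 'a option) set"
  shows "subdirect_product_of_flat ((\<lambda>s. restrict (\<lambda>\<phi>. \<phi> s) \<Phi>) ` S) \<Phi> (\<lambda>\<phi>. \<phi> ` S) (\<lambda>_. option_vee)
    \<and> iso_onto S op ((\<lambda>s. restrict (\<lambda>\<phi>. \<phi> s) \<Phi>) ` S) (prod_op \<Phi> (\<lambda>_. option_vee))
        (\<lambda>s. restrict (\<lambda>\<phi>. \<phi> s) \<Phi>)"
  unfolding \<Phi>_def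
proof (rule subdirect_product_of_flat_restrict)
  show "closed_op S op" using assms(1) by (rule closed_op_if_vee_algebra)
qed (auto intro: vee_homs_hom vee_homs_zero vee_homs_separating[OF assms(1)])

theorem theorem4p7:
  fixes S :: "'a set" and op :: "'a \<Rightarrow> 'a \<Rightarrow> 'a"
  assumes "closed_op S op"
  shows
    "((\<exists>(X :: 'x set) (Y :: 'y set) A h. functional_rep S op X Y A h) \<longrightarrow> vee_algebra S op)
     \<and> (vee_algebra S op \<longrightarrow>
          (\<exists>(X :: ('a \<Rightarrow> 'a option) set) (Y :: 'a set) A h. functional_rep S op X Y A h))
     \<and> ((\<exists>(B :: ('i \<Rightarrow> 'b) set) I F Op h.
            subdirect_product_of_flat B I F Op \<and> iso_onto S op B (prod_op I Op) h)
          \<longrightarrow> vee_algebra S op)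
     \<and> (vee_algebra S op \<longrightarrow>
          (\<exists>(B :: (('a \<Rightarrow> 'a option) \<Rightarrow> 'a option) set) I F Op h.
            subdirect_product_of_flat B I F Op \<and> iso_onto S op B (prod_op I Op) h))"
  using vee_algebra_if_functional[OF assms] functional_rep_if_vee_algebra[of S op]
    vee_algebra_if_subdirect_flat[OF assms] subdirect_product_if_vee_algebra[of S op]
  by blast

end
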